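(* Let $G$ be an infinite separable Hausdorff topological group. Then $G$ is not dense-subgroup-pseudocompact, i.e., there exists a dense subgroup of $G$ that is not pseudocompact.
   Context: A space is pseudocompact if every continuous real-valued function on it is bounded. A topological group $G$ is dense-subgroup-pseudocompact if every dense subgroup of $G$ (with the subspace topology) is pseudocompact. *)

theory Defs
  imports "HOL-Analysis.Analysis" "HOL-Algebra.Group"
begin

definition topological_group :: "('a, 'b) monoid_scheme \<Rightarrow> 'a topology \<Rightarrow> bool" where
  "topological_group G T \<longleftrightarrow>
     group G \<and> topspace T = carrier G \<and>
     continuous_map (prod_topology T T) T (\<lambda>(x, y). x \<otimes>\<^bsub>G\<^esub> y) \<and>
     continuous_map T T (\<lambda>x. inv\<^bsub>G\<^esub> x)"

definition pseudocompact_space :: "'a topology \<Rightarrow> bool" where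
  "pseudocompact_space X \<longleftrightarrow>
     (\<forall>f. continuous_map X euclideanreal f \<longrightarrow> (\<exists>B. \<forall>x\<in>topspace X. \<bar>f x\<bar> \<le> B))"

definition dense_subgroup_pseudocompact :: "('a, 'b) monoid_scheme \<Rightarrow> 'a topology \<Rightarrow> bool" where
  "dense_subgroup_pseudocompact G T \<longleftrightarrow>
     (\<forall>H. subgroup H G \<and> T closure_of H = topspace T \<longrightarrow> pseudocompact_space (subtopology T H))"

end

theory Submission
  imports Defs "HOL-Algebra.Generated_Groups"
begin

text \<open>
  Let \<open>H\<close> be the subgroup generated by a countable dense set: it is countable, dense, and infinite,
  because a finite dense subset of a \<open>T\<^sub>1\<close> space is the whole space.
  Since translations are homeomorphisms, either every point of \<open>H\<close> is isolated, so that \<open>H\<close> is an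
  infinite countable discrete space, or no point is.  In the second case \<open>H\<close>, being countable and
  regular, is Lindel\<ouml>f and hence normal; Urysohn functions with countable range then separate
  points by clopen sets, and enumerating \<open>H\<close> while cutting off clopen neighbourhoods of its points
  one after the other yields a decreasing sequence of nonempty clopen sets with empty intersection.
  In both cases the depth of a point in such a sequence is an unbounded continuous function on \<open>H\<close>.
\<close>

lemma not_pseudocompact_space_clopen_chain:
  assumes top: "C 0 = topspace X" and dec: "decseq C"
    and clopen: "\<And>n. openin X (C n)" "\<And>n. closedin X (C n)"
    and nonempty: "\<And>n. C n \<noteq> {}" and empty_Inter: "(\<Inter>n. C n) = {}"
  shows "\<not> pseudocompact_space X"
proof
  assume "pseudocompact_space X"
  have sub: "C n \<subseteq> C m" if "m \<le> n" for m n
    using dec that by (simp add: decseq_def)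
  define depth where "depth x = (LEAST n. x \<notin> C n)" for x
  have depth_eqI: "depth x = Suc k" if "x \<in> C k" "x \<notin> C (Suc k)" for x k
    unfolding depth_def
  proof (rule Least_equality)
    fix n assume "x \<notin> C n"
    show "Suc k \<le> n"
    proof (rule ccontr)
      assume "\<not> Suc k \<le> n"
      then have "C k \<subseteq> C n" using sub by simp
      with \<open>x \<notin> C n\<close> \<open>x \<in> C k\<close> show False by blast
    qed
  qed fact
  have depth_level: "\<exists>k. x \<in> C k - C (Suc k) \<and> depth x = Suc k" if "x \<in> topspace X" for x
  proof -
    have "\<exists>n. x \<notin> C n" using empty_Inter by blast
    then have out: "x \<notin> C (depth x)" unfolding depth_def by (rule LeastI_ex)
    with that top have "depth x \<noteq> 0" by (intro notI) simp
    then obtain k where k: "depth x = Suc k" using not0_implies_Suc by blast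
    then have "\<not> x \<notin> C k" unfolding depth_def by (intro not_less_Least) simp
    with out k show ?thesis by simp
  qed
  have "continuous_map X euclideanreal (\<lambda>x. real (depth x))"
    unfolding continuous_map
  proof (intro conjI allI impI)
    fix U :: "real set"
    show "openin X {x \<in> topspace X. real (depth x) \<in> U}"
    proof (subst openin_subopen, intro ballI)
      fix x assume x: "x \<in> {x \<in> topspace X. real (depth x) \<in> U}"
      then obtain k where k: "x \<in> C k - C (Suc k)" "depth x = Suc k"
        using depth_level by blast
      have "C k - C (Suc k) \<subseteq> {x \<in> topspace X. real (depth x) \<in> U}"
      proof
        fix y assume y: "y \<in> C k - C (Suc k)"
        then have "depth y = depth x" using depth_eqI[of y k] k(2) by simp
        moreover have "y \<in> topspace X" using y sub[of 0 k] top by auto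
        ultimately show "y \<in> {x \<in> topspace X. real (depth x) \<in> U}" using x by simp
      qed
      moreover have "openin X (C k - C (Suc k))" using clopen by (simp add: openin_diff)
      ultimately show "\<exists>V. openin X V \<and> x \<in> V \<and> V \<subseteq> {x \<in> topspace X. real (depth x) \<in> U}"
        using k(1) by blast
    qed
  qed simp
  then obtain B where B: "\<forall>x\<in>topspace X. \<bar>real (depth x)\<bar> \<le> B"
    using \<open>pseudocompact_space X\<close> unfolding pseudocompact_space_def by blast
  obtain x where x: "x \<in> C (nat \<lceil>B\<rceil>)" using nonempty by blast
  then have "x \<in> topspace X" using top sub[of 0 "nat \<lceil>B\<rceil>"] by blast
  then obtain k where k: "x \<in> C k - C (Suc k)" "depth x = Suc k" using depth_level by blast
  have "nat \<lceil>B\<rceil> \<le> k"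
  proof (rule ccontr)
    assume "\<not> nat \<lceil>B\<rceil> \<le> k"
    then have "Suc k \<le> nat \<lceil>B\<rceil>" by linarith
    then have "C (nat \<lceil>B\<rceil>) \<subseteq> C (Suc k)" by (rule sub)
    with x k(1) show False by blast
  qed
  then have "B < real (depth x)"
    using k(2) real_nat_ceiling_ge[of B] of_nat_mono[of "nat \<lceil>B\<rceil>" k] by simp
  moreover have "\<bar>real (depth x)\<bar> \<le> B" using B \<open>x \<in> topspace X\<close> by blast
  ultimately show False by linarith
qed

lemma countable_infinite_discrete_not_pseudocompact:
  assumes "countable U" "infinite U"
  shows "\<not> pseudocompact_space (discrete_topology U)"
proof (rule not_pseudocompact_space_clopen_chain)
  let ?C = "\<lambda>n. U - from_nat_into U ` {..<n}"
  show "decseq ?C" by (auto simp: decseq_def)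
  show "?C n \<noteq> {}" for n
    using assms(2) finite_subset[of U "from_nat_into U ` {..<n}"] by auto
  have "x \<notin> ?C (Suc (to_nat_on U x))" if "x \<in> U" for x
    using from_nat_into_to_nat_on[OF assms(1) that] by force
  then show "(\<Inter>n. ?C n) = {}" by blast
qed auto

lemma countable_normal_space_separation_by_clopen:
  assumes "normal_space X" "t1_space X" "countable (topspace X)"
    and "a \<in> topspace X" "b \<in> topspace X" "a \<noteq> b"
  obtains V where "openin X V" "closedin X V" "a \<in> V" "b \<notin> V"
proof -
  obtain f where f: "continuous_map X (top_of_set {0..1::real}) f" "f ` {a} \<subseteq> {0}" "f ` {b} \<subseteq> {1}"
    using Urysohn_lemma[OF assms(1) closedin_t1_singleton[OF assms(2,4)]
        closedin_t1_singleton[OF assms(2,5)], of 0 1] assms(6)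
    by (auto simp: disjnt_def)
  then have fc: "continuous_map X euclideanreal f"
    using continuous_map_in_subtopology by blast
  \<comment> \<open>\<open>f\<close> has countable range, so it misses some level \<open>r\<close> in \<open>]0,1[\<close>, and \<open>{f < r}\<close> is clopen.\<close>
  have "countable (f ` topspace X)" using assms(3) by blast
  then have "\<not> {0<..<1::real} \<subseteq> f ` topspace X"
    using countable_subset uncountable_open_interval[of 0 "1::real"] by auto
  then obtain r where r: "r \<in> {0<..<1}" "r \<notin> f ` topspace X" by blast
  define V where "V = {x \<in> topspace X. f x \<in> {..<r}}"
  have "openin X V"
    unfolding V_def by (rule openin_continuous_map_preimage[OF fc]) auto
  moreover have "V = {x \<in> topspace X. f x \<in> {..r}}"
    unfolding V_def using r(2) by force
  then have "closedin X V"
    using closedin_continuous_map_preimage[OF fc, of "{..r}"] by simp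
  moreover have "a \<in> V" "b \<notin> V" using f r assms(4) by (auto simp: V_def)
  ultimately show ?thesis using that by blast
qed

lemma countable_normal_space_no_isolated_not_pseudocompact:
  assumes "normal_space X" "t1_space X" "countable (topspace X)" "topspace X \<noteq> {}"
    and no_isolated: "\<And>x. x \<in> topspace X \<Longrightarrow> \<not> openin X {x}"
  shows "\<not> pseudocompact_space X"
proof -
  have shrink_ex: "\<exists>B. openin X B \<and> closedin X B \<and> B \<subseteq> A - {x} \<and> B \<noteq> {}"
    if A: "openin X A" "closedin X A" "x \<in> A" for A x
  proof -
    have x: "x \<in> topspace X" using A openin_subset by blast
    have "A \<noteq> {x}" using A(1) no_isolated[OF x] by blast
    then obtain b where b: "b \<in> A" "b \<noteq> x" using A(3) by blast
    then have "b \<in> topspace X" using A openin_subset by blast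
    then obtain V where "openin X V" "closedin X V" "x \<in> V" "b \<notin> V"
      using countable_normal_space_separation_by_clopen[OF assms(1-3) x] b(2) by blast
    with A b show ?thesis
      by (intro exI[of _ "A - V"]) auto
  qed
  define shrink where
    "shrink A x = (SOME B. openin X B \<and> closedin X B \<and> B \<subseteq> A - {x} \<and> B \<noteq> {})" for A x
  have shrink: "openin X (shrink A x) \<and> closedin X (shrink A x) \<and> shrink A x \<subseteq> A - {x} \<and> shrink A x \<noteq> {}"
    if "openin X A" "closedin X A" "x \<in> A" for A x
    unfolding shrink_def by (rule someI_ex[OF shrink_ex[OF that]])
  define s where "s = from_nat_into (topspace X)"
  define C where "C = rec_nat (topspace X) (\<lambda>n A. if s n \<in> A then shrink A (s n) else A)"
  have C_Suc: "C (Suc n) = (if s n \<in> C n then shrink (C n) (s n) else C n)" for n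
    by (simp add: C_def)
  have C_clopen: "openin X (C n) \<and> closedin X (C n) \<and> C n \<noteq> {}" for n
  proof (induction n)
    case 0
    then show ?case using assms(4) by (simp add: C_def)
  next
    case (Suc n)
    then show ?case using shrink[of "C n" "s n"] by (simp add: C_Suc)
  qed
  have C_step: "C (Suc n) \<subseteq> C n - {s n}" for n
  proof (cases "s n \<in> C n")
    case True
    then show ?thesis using shrink[of "C n" "s n"] C_clopen[of n] by (simp add: C_Suc)
  next
    case False
    then show ?thesis by (simp add: C_Suc)
  qed
  have C_0: "C 0 = topspace X" by (simp add: C_def)
  show ?thesis
  proof (rule not_pseudocompact_space_clopen_chain[of C])
    show "C 0 = topspace X" by (rule C_0)
    show "decseq C" using C_step by (auto simp: decseq_Suc_iff)
    from C_step have "s n \<notin> C (Suc n)" for n by blast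
    moreover have "(\<Inter>n. C n) \<subseteq> topspace X" using C_0 by blast
    ultimately show "(\<Inter>n. C n) = {}"
      using from_nat_into_surj[OF assms(3)] unfolding s_def by blast
  qed (use C_clopen in auto)
qed

lemma t1_space_dense_subset_infinite:
  assumes "t1_space X" "infinite (topspace X)" "S \<subseteq> topspace X"
    and "Abstract_Topology.closure_of X S = topspace X"
  shows "infinite S"
proof
  assume "finite S"
  then have "closedin X S" using assms(1,3) t1_space_closedin_finite by blast
  then have "S = topspace X" using assms(4) closure_of_closedin by metis
  with \<open>finite S\<close> assms(2) show False by simp
qed

lemma (in group) countable_generate:
  assumes "countable D" "D \<subseteq> carrier G"
  shows "countable (generate G D)"
proof -
  define level where
    "level = rec_nat (insert \<one> (D \<union> (\<lambda>x. inv x) ` D)) (\<lambda>_ A. A \<union> (\<lambda>(x, y). x \<otimes> y) ` (A \<times> A))"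
  have level_0: "level 0 = insert \<one> (D \<union> (\<lambda>x. inv x) ` D)"
    by (simp add: level_def)
  have level_Suc: "level (Suc n) = level n \<union> (\<lambda>(x, y). x \<otimes> y) ` (level n \<times> level n)" for n
    by (simp add: level_def)
  have countable_level: "countable (level n)" for n
    by (induction n) (use assms(1) in \<open>simp_all add: level_def\<close>)
  have level_mono: "level m \<subseteq> level n" if "m \<le> n" for m n
    using lift_Suc_mono_le[of level, OF _ that] level_Suc by blast
  have "generate G D \<subseteq> (\<Union>n. level n)"
  proof
    fix x assume "x \<in> generate G D"
    then show "x \<in> (\<Union>n. level n)"
    proof (induction rule: generate.induct)
      case (eng h1 h2)
      then obtain n1 n2 where "h1 \<in> level n1" "h2 \<in> level n2" by blast
      then have "h1 \<in> level (max n1 n2)" "h2 \<in> level (max n1 n2)"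
        using level_mono[of n1 "max n1 n2"] level_mono[of n2 "max n1 n2"] by auto
      then have "h1 \<otimes> h2 \<in> level (Suc (max n1 n2))" unfolding level_Suc by blast
      then show ?case by blast
    qed (use level_0 in blast)+
  qed
  moreover have "countable (\<Union>n. level n)" using countable_level by blast
  ultimately show ?thesis using countable_subset by blast
qed

lemma (in group) mult_inv_translates_eq:
  assumes "a \<in> carrier G" "c \<in> carrier G" "x \<in> carrier G"
  shows "a \<otimes> ((inv a \<otimes> x) \<otimes> inv (inv c \<otimes> x)) = c"
  using assms by (simp add: inv_mult_group m_assoc[symmetric])

locale topological_group_on = group G for G (structure) and T :: "'a topology" +
  assumes topological_group: "topological_group G T"

lemma topological_group_onI: "topological_group G T \<Longrightarrow> topological_group_on G T"
  unfolding topological_group_on_def topological_group_on_axioms_def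
  by (simp add: topological_group_def)

context topological_group_on
begin

lemma topspace_eq_carrier: "topspace T = carrier G"
  using topological_group by (simp add: topological_group_def)

lemma continuous_map_group_mult:
  assumes "continuous_map X T f" "continuous_map X T g"
  shows "continuous_map X T (\<lambda>x. f x \<otimes> g x)"
  using continuous_map_compose[OF continuous_map_pairedI[OF assms], of T "\<lambda>(x, y). x \<otimes> y"]
    topological_group
  by (simp add: topological_group_def o_def)

lemma continuous_map_group_inv:
  assumes "continuous_map X T f"
  shows "continuous_map X T (\<lambda>x. inv (f x))"
  using continuous_map_compose[OF assms, of T "m_inv G"] topological_group
  by (simp add: topological_group_def o_def)

lemma openin_left_translation_preimage:
  assumes "c \<in> carrier G" "openin T V"
  shows "openin T {x \<in> topspace T. c \<otimes> x \<in> V}"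
proof (rule openin_continuous_map_preimage[OF _ assms(2)])
  show "continuous_map T T (\<lambda>x. c \<otimes> x)"
    using assms(1) topspace_eq_carrier by (intro continuous_map_group_mult) auto
qed

lemma nhd_one_mult_inv_subset:
  assumes "openin T U" "a \<in> U"
  obtains V where "openin T V" "\<one> \<in> V" "\<And>v w. v \<in> V \<Longrightarrow> w \<in> V \<Longrightarrow> a \<otimes> (v \<otimes> inv w) \<in> U"
proof -
  have a: "a \<in> carrier G"
    using openin_subset[OF assms(1)] assms(2) topspace_eq_carrier by auto
  define \<phi> where "\<phi> p = a \<otimes> (fst p \<otimes> inv (snd p))" for p
  define Op where "Op = {p \<in> topspace (prod_topology T T). \<phi> p \<in> U}"
  have "continuous_map (prod_topology T T) T (\<lambda>p. a)"
    using a topspace_eq_carrier by simp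
  then have "continuous_map (prod_topology T T) T \<phi>"
    unfolding \<phi>_def
    by (intro continuous_map_group_mult continuous_map_group_inv continuous_map_fst continuous_map_snd)
  then have "openin (prod_topology T T) Op"
    unfolding Op_def using assms(1) by (rule openin_continuous_map_preimage)
  moreover have "(\<one>, \<one>) \<in> Op"
    using a assms(2) topspace_eq_carrier by (simp add: Op_def \<phi>_def)
  ultimately have "\<exists>V1 V2. openin T V1 \<and> openin T V2 \<and> \<one> \<in> V1 \<and> \<one> \<in> V2 \<and> V1 \<times> V2 \<subseteq> Op"
    unfolding openin_prod_topology_alt by simp
  then obtain V1 V2 where V: "openin T V1" "openin T V2" "\<one> \<in> V1" "\<one> \<in> V2" "V1 \<times> V2 \<subseteq> Op"
    by (elim exE conjE)
  show ?thesis
  proof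
    show "openin T (V1 \<inter> V2)" using V by (simp add: openin_Int)
    show "\<one> \<in> V1 \<inter> V2" using V by simp
    fix v w assume "v \<in> V1 \<inter> V2" "w \<in> V1 \<inter> V2"
    then have "(v, w) \<in> Op" using V(5) by blast
    then show "a \<otimes> (v \<otimes> inv w) \<in> U" by (simp add: Op_def \<phi>_def)
  qed
qed

lemma regular: "regular_space T"
  unfolding regular_space_def
proof (intro allI impI)
  fix C a assume Ca: "closedin T C \<and> a \<in> topspace T - C"
  then have "openin T (topspace T - C)" "a \<in> topspace T - C" by auto
  then obtain V where V: "openin T V" "\<one> \<in> V"
    and V_diff: "\<And>v w. v \<in> V \<Longrightarrow> w \<in> V \<Longrightarrow> a \<otimes> (v \<otimes> inv w) \<in> topspace T - C"
    by (rule nhd_one_mult_inv_subset) blast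
  define translate where "translate c = {x \<in> topspace T. inv c \<otimes> x \<in> V}" for c
  have C: "C \<subseteq> carrier G" and a: "a \<in> carrier G" "a \<notin> C"
    using Ca closedin_subset topspace_eq_carrier by auto
  have open_translate: "openin T (translate c)" if "c \<in> carrier G" for c
    unfolding translate_def using openin_left_translation_preimage[OF _ V(1)] that by simp
  show "\<exists>U W. openin T U \<and> openin T W \<and> a \<in> U \<and> C \<subseteq> W \<and> disjnt U W"
  proof (intro exI conjI)
    show "openin T (translate a)" using a(1) by (rule open_translate)
    show "openin T (\<Union>c\<in>C. translate c)"
      using C open_translate by (intro openin_Union) auto
    show "a \<in> translate a" using a V(2) topspace_eq_carrier by (simp add: translate_def)
    have "c \<in> translate c" if "c \<in> C" for c
      using that C V(2) topspace_eq_carrier by (auto simp: translate_def)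
    then show "C \<subseteq> (\<Union>c\<in>C. translate c)" by blast
    show "disjnt (translate a) (\<Union>c\<in>C. translate c)"
    proof (clarsimp simp: disjnt_iff)
      fix x c assume x: "x \<in> translate a" "x \<in> translate c" and "c \<in> C"
      then have "a \<otimes> ((inv a \<otimes> x) \<otimes> inv (inv c \<otimes> x)) \<notin> C"
        using V_diff by (simp add: translate_def)
      moreover have "x \<in> carrier G" using x(1) topspace_eq_carrier by (simp add: translate_def)
      then have "a \<otimes> ((inv a \<otimes> x) \<otimes> inv (inv c \<otimes> x)) = c"
        using \<open>c \<in> C\<close> C a(1) by (intro mult_inv_translates_eq) auto
      ultimately show False using \<open>c \<in> C\<close> by simp
    qed
  qed
qed

lemma openin_subgroup_singleton_translate:
  assumes H: "subgroup H G" and "h \<in> H" "openin (subtopology T H) {h}" "k \<in> H"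
  shows "openin (subtopology T H) {k}"
proof -
  have "\<exists>W. openin T W \<and> {h} = W \<inter> H"
    using assms(3) by (simp only: openin_subtopology)
  then obtain W where W: "openin T W" "{h} = W \<inter> H" by (elim exE conjE)
  have hk: "h \<in> carrier G" "k \<in> carrier G"
    using subgroup.mem_carrier[OF H] assms(2,4) by auto
  define c where "c = h \<otimes> inv k"
  have c: "c \<in> carrier G" "c \<in> H" "c \<otimes> k = h"
    using hk by (simp_all add: c_def m_assoc subgroup.m_closed subgroup.m_inv_closed H assms(2,4))
  define W' where "W' = {x \<in> topspace T. c \<otimes> x \<in> W}"
  have "openin T W'"
    unfolding W'_def using c(1) W(1) by (rule openin_left_translation_preimage)
  moreover have "{k} = W' \<inter> H"
  proof (intro equalityI subsetI)
    fix x assume x: "x \<in> W' \<inter> H"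
    then have "c \<otimes> x \<in> W \<inter> H" using c(2) H by (simp add: W'_def subgroup.m_closed)
    then have "c \<otimes> x \<in> {h}" unfolding W(2) .
    then have "c \<otimes> x = c \<otimes> k" using c(3) by simp
    then show "x \<in> {k}" using x c(1) hk(2) topspace_eq_carrier by (simp add: W'_def)
  next
    have "h \<in> W" using W(2) by blast
    then show "x \<in> W' \<inter> H" if "x \<in> {k}" for x
      using that c(3) assms(4) hk(2) topspace_eq_carrier by (simp add: W'_def)
  qed
  ultimately show ?thesis
    unfolding openin_subtopology by (intro exI[of _ W']) simp
qed

lemma countable_subgroup_not_pseudocompact:
  assumes "Hausdorff_space T" and H: "subgroup H G" "countable H" "infinite H"
  shows "\<not> pseudocompact_space (subtopology T H)"
proof -
  have topH: "topspace (subtopology T H) = H"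
    using subgroup.subset[OF H(1)] topspace_eq_carrier by auto
  consider (discrete) "\<And>h. h \<in> H \<Longrightarrow> openin (subtopology T H) {h}"
    | (no_isolated) "\<And>h. h \<in> H \<Longrightarrow> \<not> openin (subtopology T H) {h}"
    using openin_subgroup_singleton_translate[OF H(1)] by blast
  then show ?thesis
  proof cases
    case discrete
    then have "discrete_topology H = subtopology T H"
      using topH by (simp add: discrete_topology_unique)
    then show ?thesis using countable_infinite_discrete_not_pseudocompact[OF H(2,3)] by simp
  next
    case no_isolated
    have "regular_space (subtopology T H)"
      by (rule regular_space_subtopology[OF regular])
    moreover have "Lindelof_space (subtopology T H)"
      using H(2) topH by (simp add: countable_imp_Lindelof_space)
    ultimately have "normal_space (subtopology T H)"
      by (rule regular_Lindelof_imp_normal_space)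
    moreover have "t1_space (subtopology T H)"
      using Hausdorff_imp_t1_space[OF assms(1)] by (rule t1_space_subtopology)
    moreover have "topspace (subtopology T H) \<noteq> {}"
      using topH H(3) by auto
    ultimately show ?thesis
      using H(2) no_isolated topH by (intro countable_normal_space_no_isolated_not_pseudocompact) auto
  qed
qed

end

theorem mainTheorem6:
  fixes G :: "('a, 'b) monoid_scheme" and T :: "'a topology"
  assumes "topological_group G T"
    and "Hausdorff_space T"
    and "separable_space T"
    and "infinite (carrier G)"
  shows "\<not> dense_subgroup_pseudocompact G T \<and>
         (\<exists>H. subgroup H G \<and> T closure_of H = topspace T \<and> \<not> pseudocompact_space (subtopology T H))"
proof -
  interpret topological_group_on G T using assms(1) by (rule topological_group_onI)
  obtain D where D: "countable D" "D \<subseteq> topspace T" "Abstract_Topology.closure_of T D = topspace T"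
    using assms(3) unfolding separable_space_def by blast
  define H where "H = generate G D"
  have H: "subgroup H G" "countable H"
    unfolding H_def using D topspace_eq_carrier generate_is_subgroup countable_generate by auto
  have "D \<subseteq> H" unfolding H_def by (auto intro: generate.incl)
  then have H_dense: "Abstract_Topology.closure_of T H = topspace T"
    using D(3) closure_of_mono[of D H T] closure_of_subset_topspace[of T H] by blast
  have "infinite H"
    using t1_space_dense_subset_infinite[OF Hausdorff_imp_t1_space[OF assms(2)]] assms(4)
      topspace_eq_carrier subgroup.subset[OF H(1)] H_dense by simp
  then have "\<not> pseudocompact_space (subtopology T H)"
    using countable_subgroup_not_pseudocompact[OF assms(2) H] by blast
  with H(1) H_dense show ?thesis
    unfolding dense_subgroup_pseudocompact_def by blast
qed

end
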